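(* Let $\Gamma,\Delta$ be finitely generated groups acting continuously on compact metric spaces $Y$ and $X$ respectively, where $Y$ is connected, the action $\Gamma\curvearrowright Y$ has at least one free orbit, and the action $\Delta\curvearrowright X$ is free. Let $f:Y\to X$ be a continuous map inducing a quasi-isometry of warped cones, i.e. there are an index set $I$, maps $I\ni i\mapsto t_i\in(0,\infty)$ and $I\ni i\mapsto \tau_i\in(0,\infty)$ that are both surjective onto $(0,\infty)$, and constants $C\ge1$, $A\ge0$ such that for every $i\in I$ the map $f:(t_iY,d_\Gamma)\to(\tau_iX,d_\Delta)$ satisfies $C^{-1}d_\Gamma(y,y')-A\le d_\Delta(f(y),f(y'))\le Cd_\Gamma(y,y')+A$ for all $y,y'$ and the $A$-neighbourhood of $f(Y)$ in $(\tau_iX,d_\Delta)$ is all of $\tau_iX$. Let $\Delta'=\{\delta\in\Delta:\delta\,\mathrm{im}(f)=\mathrm{im}(f)\}$. Then: (1) $\Delta'$ has finite index in $\Delta$ and there is a short exact sequence $1\to F\to\Gamma\to\Delta'\to1$ with $F$ finite; (2) there is a homeomorphism $h:\mathrm{im}(f)\to Y/F$ such that the quotient map $q:Y\to Y/F$ equals $h\circ f$, and $h$ conjugates the actions $\Delta'\curvearrowright\mathrm{im}(f)$ and $\Gamma/F\curvearrowright Y/F$; (3) $\mathrm{im}(f)$ is one of $[\Delta:\Delta']$ many connected components of $X$, and $\Delta$ acts transitively on them. In particular, if $f$ is a homeomorphism, then $\Gamma$ and $\Delta$ are isomorphic and the actions are conjugate by $f$.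
   Context: $S$ is a fixed finite symmetric generating set of the group, $|\gamma|$ the word length. For a compact metric space $(Y,d)$ with an action of $\Gamma=\langle S\rangle$ and $t>0$, $tY$ denotes $Y$ with metric $td$ and $d_\Gamma$ is the largest metric on $tY$ with $d_\Gamma(y,y')\le t\,d(y,y')$ and $d_\Gamma(y,sy)\le1$ for all $y,y'\in Y$, $s\in S$ (the warped metric). A free orbit is an orbit $\Gamma y$ with trivial stabiliser of $y$. *)

theory Defs
  imports "HOL-Analysis.Analysis" "HOL-Algebra.Group_Action" "HOL-Algebra.Generated_Groups"
begin

definition fin_sym_gen_set :: "('g, 'b) monoid_scheme \<Rightarrow> 'g set \<Rightarrow> bool" where
  "fin_sym_gen_set G S \<longleftrightarrow> finite S \<and> S \<subseteq> carrier G \<and>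
     (\<forall>s\<in>S. inv\<^bsub>G\<^esub> s \<in> S) \<and> generate G S = carrier G"

definition continuous_action :: "('g, 'b) monoid_scheme \<Rightarrow> 'y metric \<Rightarrow> ('g \<Rightarrow> 'y \<Rightarrow> 'y) \<Rightarrow> bool" where
  "continuous_action G m \<phi> \<longleftrightarrow> group_action G (mspace m) \<phi> \<and>
     (\<forall>g\<in>carrier G. continuous_map (mtopology_of m) (mtopology_of m) (\<phi> g))"

text \<open>The warped metric d_Gamma on tY: the largest metric rho on Y with
  rho(y,y') \<le> t d(y,y') and rho(y, s y) \<le> 1 for all s in S (taken as the
  pointwise supremum of all such metrics).\<close>
definition warped_dist ::
  "'y metric \<Rightarrow> ('g \<Rightarrow> 'y \<Rightarrow> 'y) \<Rightarrow> 'g set \<Rightarrow> real \<Rightarrow> 'y \<Rightarrow> 'y \<Rightarrow> real" where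
  "warped_dist m \<phi> S t y y' = Sup {\<rho> y y' | \<rho>. Metric_space (mspace m) \<rho> \<and>
      (\<forall>x\<in>mspace m. \<forall>x'\<in>mspace m. \<rho> x x' \<le> t * mdist m x x') \<and>
      (\<forall>x\<in>mspace m. \<forall>s\<in>S. \<rho> x (\<phi> s x) \<le> 1)}"

definition free_point :: "('g, 'b) monoid_scheme \<Rightarrow> ('g \<Rightarrow> 'y \<Rightarrow> 'y) \<Rightarrow> 'y \<Rightarrow> bool" where
  "free_point G \<phi> y \<longleftrightarrow> (\<forall>g\<in>carrier G. \<phi> g y = y \<longrightarrow> g = \<one>\<^bsub>G\<^esub>)"

end

theory Submission
  imports Defs
begin

(* At scale t the warped distance lies between an explicit path metric, in which a path costs
   t times the length of its moves plus its number of generator jumps, and word length. As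
   t grows, a path of bounded cost can jump only boundedly often while its moves shrink to
   nothing; hence bounded warped distance at all scales means that a word of bounded length
   moves one point to the other (or into a closed set).

   Through the quasi-isometry this shows that f(gamma y) = delta_y f(y) with delta_y in a
   finite ball; the sets of y where a given delta works are closed, disjoint by freeness and
   cover the connected space Y, so delta is constant. This gives a homomorphism pi with
   f o gamma = pi(gamma) o f. Conversely f y' = delta f y forces y' = gamma y with
   pi(gamma) = delta and gamma of bounded length, so the kernel F is finite (freeness at one
   point), the fibres of f are the F-orbits and pi(Gamma) is the stabiliser D' of im f.
   Finally, density of im f at every scale covers X by finitely many translates delta (im f),
   which are compact, connected and pairwise equal or disjoint: they are the components of X,
   indexed by the cosets of D'. *)

lemma finite_ex_pos_uniform:
  fixes P :: "'a \<Rightarrow> real \<Rightarrow> bool"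
  assumes fin: "finite A" and ex: "\<And>a. a \<in> A \<Longrightarrow> \<exists>\<delta>>0. P a \<delta>"
    and mono: "\<And>a \<delta> \<delta>'. P a \<delta> \<Longrightarrow> 0 < \<delta>' \<Longrightarrow> \<delta>' \<le> \<delta> \<Longrightarrow> P a \<delta>'"
  shows "\<exists>\<delta>>0. \<forall>a\<in>A. P a \<delta>"
proof -
  obtain d where d: "\<And>a. a \<in> A \<Longrightarrow> d a > 0 \<and> P a (d a)" using ex by metis
  define \<delta> where "\<delta> = Min (insert 1 (d ` A))"
  have pos: "\<delta> > 0" using fin d by (simp add: \<delta>_def)
  have "P a \<delta>" if "a \<in> A" for a
  proof (rule mono)
    show "P a (d a)" using d that by blast
    show "\<delta> \<le> d a" using fin that by (simp add: \<delta>_def)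
  qed (fact pos)
  then show ?thesis using pos by blast
qed

lemma Hausdorff_space_mtopology_of: "Hausdorff_space (mtopology_of m)"
  by (simp add: Metric_space.Hausdorff_space_mtopology mtopology_of_def)

lemma openin_finite_closed_partition:
  assumes fin: "finite \<T>" and cl: "\<And>T. T \<in> \<T> \<Longrightarrow> closedin X T"
    and cov: "topspace X \<subseteq> \<Union>\<T>"
    and dj: "\<And>T T'. T \<in> \<T> \<Longrightarrow> T' \<in> \<T> \<Longrightarrow> T \<inter> T' \<noteq> {} \<Longrightarrow> T = T'" and T: "T \<in> \<T>"
  shows "openin X T"
proof -
  have sub: "T' \<subseteq> topspace X" if "T' \<in> \<T>" for T' using cl[OF that] closedin_subset by blast
  have "topspace X - T = \<Union>(\<T> - {T})"
  proof
    show "topspace X - T \<subseteq> \<Union>(\<T> - {T})" using cov by blast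
    show "\<Union>(\<T> - {T}) \<subseteq> topspace X - T"
    proof
      fix x assume "x \<in> \<Union>(\<T> - {T})"
      then obtain T' where "T' \<in> \<T>" "T' \<noteq> T" "x \<in> T'" by blast
      then show "x \<in> topspace X - T" using dj[OF T, of T'] sub by blast
    qed
  qed
  moreover have "closedin X (\<Union>(\<T> - {T}))" using fin cl by (intro closedin_Union) auto
  ultimately show ?thesis using sub[OF T] by (simp add: openin_closedin_eq)
qed

lemma connected_space_finite_closed_partition:
  assumes X: "connected_space X" and fin: "finite A" and cl: "\<And>a. a \<in> A \<Longrightarrow> closedin X (B a)"
    and dj: "disjoint_family_on B A" and cov: "topspace X \<subseteq> \<Union>(B ` A)" and p: "p \<in> topspace X"
  shows "\<exists>a\<in>A. B a = topspace X"
proof -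
  obtain a where a: "a \<in> A" "p \<in> B a" using cov p by blast
  have "openin X (B a)"
  proof (rule openin_finite_closed_partition[of "B ` A"])
    fix T T' assume "T \<in> B ` A" "T' \<in> B ` A" and ne: "T \<inter> T' \<noteq> {}"
    then obtain b b' where "b \<in> A" "b' \<in> A" "T = B b" "T' = B b'" by blast
    then show "T = T'" using dj ne unfolding disjoint_family_on_def by (cases "b = b'") auto
  qed (use fin cl cov a in auto)
  then show ?thesis using X cl[OF a(1)] a connected_space_clopen_in by blast
qed

lemma connected_components_of_clopen:
  assumes c: "connectedin X C" and cl: "closedin X C" and op: "openin X C" and ne: "x \<in> C"
  shows "C \<in> connected_components_of X"
proof -
  have x: "x \<in> topspace X" using ne closedin_subset[OF cl] by blast
  define K where "K = connected_component_of_set X x"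
  have K: "K \<in> connected_components_of X"
    unfolding K_def by (rule iffD2[OF connected_component_in_connected_components_of x])
  have "C \<subseteq> K" unfolding K_def using connected_component_of_maximal[OF c ne] .
  moreover have "K \<subseteq> C \<or> disjnt K C"
    using connectedin_clopen_cases[OF connectedin_connected_components_of[OF K] cl op] .
  moreover have "x \<in> K" unfolding K_def using x by (simp add: connected_component_of_refl)
  ultimately have "K = C" using ne unfolding disjnt_def by blast
  then show ?thesis using K by simp
qed

lemma card_image_eq_if_same_fibres:
  assumes same: "\<And>a b. a \<in> A \<Longrightarrow> b \<in> A \<Longrightarrow> f a = f b \<longleftrightarrow> g a = g b"
  shows "card (f ` A) = card (g ` A) \<and> (finite (f ` A) \<longleftrightarrow> finite (g ` A))"
proof -
  have key: "g (inv_into A f (f a)) = g a" if "a \<in> A" for a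
    using same[OF inv_into_into[of "f a" f A] that] that by (simp add: f_inv_into_f)
  have "bij_betw (\<lambda>u. g (inv_into A f u)) (f ` A) (g ` A)"
  proof (rule bij_betw_imageI)
    show "inj_on (\<lambda>u. g (inv_into A f u)) (f ` A)"
      by (rule inj_onI) (auto simp: key same)
    show "(\<lambda>u. g (inv_into A f u)) ` f ` A = g ` A"
      by (simp add: image_image key cong: image_cong)
  qed
  then show ?thesis using bij_betw_same_card bij_betw_finite by blast
qed

definition quotient_topology :: "'a topology \<Rightarrow> ('a \<Rightarrow> 'b) \<Rightarrow> 'b topology" where
  "quotient_topology X q =
     topology (\<lambda>U. U \<subseteq> q ` topspace X \<and> openin X {x \<in> topspace X. q x \<in> U})"

lemma openin_quotient_topology:
  "openin (quotient_topology X q) U \<longleftrightarrow> U \<subseteq> q ` topspace X \<and> openin X {x \<in> topspace X. q x \<in> U}"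
proof -
  have "istopology (\<lambda>U. U \<subseteq> q ` topspace X \<and> openin X {x \<in> topspace X. q x \<in> U})"
    unfolding istopology_def
  proof (rule conjI; intro allI impI)
    fix U V assume U: "U \<subseteq> q ` topspace X \<and> openin X {x \<in> topspace X. q x \<in> U}"
      and V: "V \<subseteq> q ` topspace X \<and> openin X {x \<in> topspace X. q x \<in> V}"
    have "{x \<in> topspace X. q x \<in> U \<inter> V} =
        {x \<in> topspace X. q x \<in> U} \<inter> {x \<in> topspace X. q x \<in> V}" by blast
    moreover have "openin X ({x \<in> topspace X. q x \<in> U} \<inter> {x \<in> topspace X. q x \<in> V})"
      using U V by (intro openin_Int) simp_all
    ultimately show "U \<inter> V \<subseteq> q ` topspace X \<and> openin X {x \<in> topspace X. q x \<in> U \<inter> V}"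
      using U by auto
  next
    fix \<U> assume \<U>: "\<forall>U\<in>\<U>. U \<subseteq> q ` topspace X \<and> openin X {x \<in> topspace X. q x \<in> U}"
    have "{x \<in> topspace X. q x \<in> \<Union>\<U>} = (\<Union>U\<in>\<U>. {x \<in> topspace X. q x \<in> U})" by blast
    moreover have "openin X (\<Union>U\<in>\<U>. {x \<in> topspace X. q x \<in> U})"
      using \<U> by (intro openin_Union) blast
    ultimately show "\<Union>\<U> \<subseteq> q ` topspace X \<and> openin X {x \<in> topspace X. q x \<in> \<Union>\<U>}"
      using \<U> by auto
  qed
  then show ?thesis unfolding quotient_topology_def by (simp add: topology_inverse')
qed

lemma topspace_quotient_topology: "topspace (quotient_topology X q) = q ` topspace X"
proof
  show "topspace (quotient_topology X q) \<subseteq> q ` topspace X"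
    by (metis openin_quotient_topology openin_topspace)
  have "{x \<in> topspace X. q x \<in> q ` topspace X} = topspace X" by blast
  then have "openin (quotient_topology X q) (q ` topspace X)"
    by (simp add: openin_quotient_topology)
  then show "q ` topspace X \<subseteq> topspace (quotient_topology X q)" by (rule openin_subset)
qed

lemma quotient_map_quotient_topology: "quotient_map X (quotient_topology X q) q"
  by (simp add: quotient_map_def topspace_quotient_topology openin_quotient_topology)

locale warped_action = group G for G :: "'g monoid" (structure) +
  fixes m :: "'y metric" and \<phi> :: "'g \<Rightarrow> 'y \<Rightarrow> 'y" and S :: "'g set"
  assumes gens: "fin_sym_gen_set G S" and action: "continuous_action G m \<phi>"
begin

lemma group_action: "group_action G (mspace m) \<phi>"
  using action by (simp add: continuous_action_def)

lemma continuous_map_act: "g \<in> carrier G \<Longrightarrow> continuous_map (mtopology_of m) (mtopology_of m) (\<phi> g)"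
  using action by (simp add: continuous_action_def)

lemma gens_carrier: "S \<subseteq> carrier G" and finite_gens: "finite S"
  and gens_inv: "s \<in> S \<Longrightarrow> inv s \<in> S" and generate_gens: "generate G S = carrier G"
  using gens by (auto simp: fin_sym_gen_set_def)

lemma act_closed: "g \<in> carrier G \<Longrightarrow> x \<in> mspace m \<Longrightarrow> \<phi> g x \<in> mspace m"
  using group_action.element_image[OF group_action] by blast

lemma act_mult: "g \<in> carrier G \<Longrightarrow> h \<in> carrier G \<Longrightarrow> x \<in> mspace m \<Longrightarrow> \<phi> (g \<otimes> h) x = \<phi> g (\<phi> h x)"
  using group_action.composition_rule[OF group_action] by blast

lemma act_image: "g \<in> carrier G \<Longrightarrow> \<phi> g ` mspace m = mspace m"
  using group_action.surj_prop[OF group_action] by blast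

lemma inj_on_act: "g \<in> carrier G \<Longrightarrow> inj_on (\<phi> g) (mspace m)"
  using group_action.inj_prop[OF group_action] by blast

lemma act_one: "x \<in> mspace m \<Longrightarrow> \<phi> \<one> x = x"
  by (metis group_action.id_eq_one[OF group_action] restrict_apply')

lemma act_inv_act: "g \<in> carrier G \<Longrightarrow> x \<in> mspace m \<Longrightarrow> \<phi> (inv g) (\<phi> g x) = x"
  by (metis act_mult inv_closed l_inv act_one)

lemma act_act_inv: "g \<in> carrier G \<Longrightarrow> x \<in> mspace m \<Longrightarrow> \<phi> g (\<phi> (inv g) x) = x"
  by (metis act_mult inv_closed r_inv act_one)

lemma free_point_act_eqD:
  assumes "free_point G \<phi> x" "x \<in> mspace m" "a \<in> carrier G" "b \<in> carrier G" "\<phi> a x = \<phi> b x"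
  shows "a = b"
proof -
  have "\<phi> (inv b \<otimes> a) x = x"
    using assms(2-5) act_mult act_inv_act by (metis inv_closed)
  then have "inv b \<otimes> a = \<one>" using assms(1,3,4) by (simp add: free_point_def)
  then show ?thesis using assms(3,4) by (metis inv_equality inv_inv inv_closed)
qed

fun word_ball :: "nat \<Rightarrow> 'g set" where
  "word_ball 0 = {\<one>}"
| "word_ball (Suc n) = word_ball n \<union> (\<lambda>(s, w). s \<otimes> w) ` (S \<times> word_ball n)"

lemma finite_word_ball: "finite (word_ball n)"
  by (induction n) (auto simp: finite_gens)

lemma word_ball_carrier: "word_ball n \<subseteq> carrier G"
  by (induction n) (use gens_carrier in auto)

lemma word_ball_mono: "n \<le> n' \<Longrightarrow> word_ball n \<subseteq> word_ball n'"
  by (induction n' rule: dec_induct) auto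

lemma word_ball_gen_mult: "s \<in> S \<Longrightarrow> w \<in> word_ball n \<Longrightarrow> s \<otimes> w \<in> word_ball (Suc n)"
  by auto

lemma word_ball_mult: "a \<in> word_ball n \<Longrightarrow> b \<in> word_ball k \<Longrightarrow> a \<otimes> b \<in> word_ball (n + k)"
proof (induction n arbitrary: a)
  case 0
  then have "b \<in> carrier G" using word_ball_carrier by blast
  with 0 show ?case by simp
next
  case (Suc n)
  show ?case
  proof (cases "a \<in> word_ball n")
    case True
    then show ?thesis using Suc word_ball_mono[of "n + k" "Suc n + k"] by auto
  next
    case False
    then obtain s w where sw: "s \<in> S" "w \<in> word_ball n" "a = s \<otimes> w" using Suc.prems(1) by auto
    have "a \<otimes> b = s \<otimes> (w \<otimes> b)"
      using sw Suc.prems(2) gens_carrier word_ball_carrier by (meson m_assoc subsetD)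
    then show ?thesis using word_ball_gen_mult[OF sw(1) Suc.IH[OF sw(2) Suc.prems(2)]] by simp
  qed
qed

lemma carrier_word_ball: "g \<in> carrier G \<Longrightarrow> \<exists>n. g \<in> word_ball n"
proof -
  assume "g \<in> carrier G"
  then have "g \<in> generate G S" using generate_gens by simp
  then show ?thesis
  proof (induction rule: generate.induct)
    case one
    then show ?case using word_ball.simps(1) by blast
  next
    case (incl h)
    then have "h \<otimes> \<one> \<in> word_ball (Suc 0)" by (intro word_ball_gen_mult) auto
    moreover have "h \<otimes> \<one> = h" using incl gens_carrier by auto
    ultimately show ?case by metis
  next
    case (inv h)
    then have "inv h \<otimes> \<one> \<in> word_ball (Suc 0)" using gens_inv by (intro word_ball_gen_mult) auto
    moreover have "inv h \<otimes> \<one> = inv h" using inv gens_carrier by auto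
    ultimately show ?case by metis
  next
    case (eng h1 h2)
    then show ?case using word_ball_mult by blast
  qed
qed

text \<open>A jump path from x to y with n jumps and length L alternates moves in the space, of total
  length L, with n jumps along generators. Its cost at scale t is t L + n; the least cost
  path_dist t is an admissible metric and hence a lower bound for the warped distance.\<close>

inductive jump_path :: "'y \<Rightarrow> 'y \<Rightarrow> nat \<Rightarrow> real \<Rightarrow> bool" for x where
  start: "x \<in> mspace m \<Longrightarrow> jump_path x x 0 0"
| move: "jump_path x y n L \<Longrightarrow> z \<in> mspace m \<Longrightarrow> jump_path x z n (L + mdist m y z)"
| jump: "jump_path x y n L \<Longrightarrow> s \<in> S \<Longrightarrow> jump_path x (\<phi> s y) (Suc n) L"

lemma jump_path_mspace: "jump_path x y n L \<Longrightarrow> x \<in> mspace m \<and> y \<in> mspace m \<and> L \<ge> 0"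
  by (induction rule: jump_path.induct) (use gens_carrier act_closed in auto)

lemma jump_path_trans:
  assumes "jump_path x y n1 L1" "jump_path y z n2 L2"
  shows "jump_path x z (n1 + n2) (L1 + L2)"
  using assms(2,1)
proof (induction rule: jump_path.induct)
  case start
  then show ?case by simp
next
  case (move y' n L z)
  then have "jump_path x z (n1 + n) ((L1 + L) + mdist m y' z)" using jump_path.move by blast
  then show ?case by (simp add: add.assoc)
next
  case (jump y' n L s)
  then show ?case using jump_path.jump by fastforce
qed

lemma jump_path_dist: "x \<in> mspace m \<Longrightarrow> y \<in> mspace m \<Longrightarrow> jump_path x y 0 (mdist m x y)"
  using jump_path.move[OF jump_path.start] by fastforce

lemma jump_path_gen: "x \<in> mspace m \<Longrightarrow> s \<in> S \<Longrightarrow> jump_path x (\<phi> s x) 1 0"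
  using jump_path.jump[OF jump_path.start] by fastforce

lemma jump_path_sym: "jump_path x y n L \<Longrightarrow> jump_path y x n L"
proof (induction rule: jump_path.induct)
  case (start)
  then show ?case by (rule jump_path.start)
next
  case (move y n L z)
  have "jump_path z y 0 (mdist m z y)"
    using move jump_path_mspace jump_path_dist by blast
  from jump_path_trans[OF this move.IH] show ?case by (simp add: mdist_commute add.commute)
next
  case (jump y n L s)
  have y: "y \<in> mspace m" and s: "s \<in> carrier G" using jump jump_path_mspace gens_carrier by auto
  have "jump_path (\<phi> s y) (\<phi> (inv s) (\<phi> s y)) 1 0"
    using jump_path_gen[OF act_closed[OF s y] gens_inv[OF jump(2)]] .
  then have "jump_path (\<phi> s y) y 1 0" using act_inv_act[OF s y] by simp
  from jump_path_trans[OF this jump.IH] show ?case by simp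
qed

lemma jump_path_decompose:
  "jump_path x y n L \<Longrightarrow> (n = 0 \<longrightarrow> mdist m x y \<le> L) \<and>
    (\<forall>k. n = Suc k \<longrightarrow> (\<exists>b s L1 L2. jump_path x b k L1 \<and> s \<in> S \<and>
        mdist m (\<phi> s b) y \<le> L2 \<and> L1 + L2 \<le> L \<and> L2 \<ge> 0))"
proof (induction rule: jump_path.induct)
  case start
  then have "mdist m x x = 0" by simp
  then show ?case by simp
next
  case (move y n L z)
  have xy: "x \<in> mspace m" "y \<in> mspace m" using move(1) jump_path_mspace by auto
  have z: "z \<in> mspace m" by fact
  show ?case
  proof (intro conjI allI impI)
    assume "n = 0"
    then show "mdist m x z \<le> L + mdist m y z" using move mdist_triangle[OF xy z] by linarith
  next
    fix k assume "n = Suc k"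
    then obtain b s L1 L2 where b: "jump_path x b k L1" "s \<in> S" "mdist m (\<phi> s b) y \<le> L2"
      "L1 + L2 \<le> L" "L2 \<ge> 0"
      using move by blast
    have "\<phi> s b \<in> mspace m" using b jump_path_mspace gens_carrier act_closed by blast
    then have "mdist m (\<phi> s b) z \<le> L2 + mdist m y z"
      using mdist_triangle[OF _ xy(2) z] b(3) by fastforce
    then show "\<exists>b s L1 L2. jump_path x b k L1 \<and> s \<in> S \<and> mdist m (\<phi> s b) z \<le> L2 \<and>
        L1 + L2 \<le> L + mdist m y z \<and> L2 \<ge> 0"
      using b by (intro exI[of _ b] exI[of _ s] exI[of _ L1] exI[of _ "L2 + mdist m y z"]) auto
  qed
next
  case (jump y n L s)
  have "\<phi> s y \<in> mspace m" using jump jump_path_mspace gens_carrier act_closed by blast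
  then have "mdist m (\<phi> s y) (\<phi> s y) = 0" by simp
  then show ?case using jump(1,2) by fastforce
qed

lemma jump_path_0_dist: "jump_path x y 0 L \<Longrightarrow> mdist m x y \<le> L"
  using jump_path_decompose by blast

lemma jump_path_SucE:
  assumes "jump_path x y (Suc k) L"
  obtains b s L1 L2 where "jump_path x b k L1" "s \<in> S" "mdist m (\<phi> s b) y \<le> L2"
    "L1 + L2 \<le> L" "L2 \<ge> 0"
  using jump_path_decompose[OF assms] by blast

definition path_dist :: "real \<Rightarrow> 'y \<Rightarrow> 'y \<Rightarrow> real" where
  "path_dist t x y = (if x \<in> mspace m \<and> y \<in> mspace m
     then Inf {t * L + real n | n L. jump_path x y n L} else 0)"

lemma path_dist_le: "t \<ge> 0 \<Longrightarrow> jump_path x y n L \<Longrightarrow> path_dist t x y \<le> t * L + real n"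
  unfolding path_dist_def using jump_path_mspace[of x y n L]
  by (auto intro!: cInf_lower bdd_belowI[of _ 0] dest: jump_path_mspace)

lemma path_dist_greatest:
  "x \<in> mspace m \<Longrightarrow> y \<in> mspace m \<Longrightarrow> (\<And>n L. jump_path x y n L \<Longrightarrow> c \<le> t * L + real n) \<Longrightarrow>
    c \<le> path_dist t x y"
  unfolding path_dist_def using jump_path_dist[of x y] by (auto intro!: cInf_greatest)

lemma path_dist_nonneg: "t \<ge> 0 \<Longrightarrow> 0 \<le> path_dist t x y"
proof (cases "x \<in> mspace m \<and> y \<in> mspace m")
  case True
  assume "t \<ge> 0"
  then show ?thesis
    using True jump_path_mspace by (intro path_dist_greatest) auto
qed (auto simp: path_dist_def)

lemma path_dist_commute: "path_dist t x y = path_dist t y x"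
proof -
  have "{t * L + real n | n L. jump_path x y n L} = {t * L + real n | n L. jump_path y x n L}"
    using jump_path_sym by blast
  then show ?thesis unfolding path_dist_def by (simp add: conj_commute)
qed

text \<open>A path either jumps, costing at least 1, or is a pure move, costing at least t d(x,y).\<close>
lemma path_dist_lower:
  assumes "t > 0" "x \<in> mspace m" "y \<in> mspace m"
  shows "min 1 (t * mdist m x y) \<le> path_dist t x y"
proof (rule path_dist_greatest[OF assms(2,3)])
  fix n L assume p: "jump_path x y n L"
  show "min 1 (t * mdist m x y) \<le> t * L + real n"
  proof (cases n)
    case 0
    then show ?thesis using jump_path_0_dist p assms(1) by (simp add: min.coboundedI2)
  next
    case (Suc k)
    then show ?thesis using jump_path_mspace[OF p] assms(1) by (simp add: min.coboundedI1)
  qed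
qed

lemma path_dist_triangle:
  assumes t: "t \<ge> 0" and xyz: "x \<in> mspace m" "y \<in> mspace m" "z \<in> mspace m"
  shows "path_dist t x z \<le> path_dist t x y + path_dist t y z"
proof -
  have "path_dist t x z - path_dist t x y \<le> path_dist t y z"
  proof (rule path_dist_greatest[OF xyz(2,3)])
    fix n2 L2 assume p2: "jump_path y z n2 L2"
    have "path_dist t x z - (t * L2 + real n2) \<le> path_dist t x y"
    proof (rule path_dist_greatest[OF xyz(1,2)])
      fix n1 L1 assume p1: "jump_path x y n1 L1"
      show "path_dist t x z - (t * L2 + real n2) \<le> t * L1 + real n1"
        using path_dist_le[OF t jump_path_trans[OF p1 p2]] by (simp add: algebra_simps)
    qed
    then show "path_dist t x z - path_dist t x y \<le> t * L2 + real n2" by linarith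
  qed
  then show ?thesis by linarith
qed

lemma metric_path_dist: "t > 0 \<Longrightarrow> Metric_space (mspace m) (path_dist t)"
proof (unfold_locales)
  fix x y assume t: "t > 0"
  show "0 \<le> path_dist t x y" using path_dist_nonneg t by simp
  show "path_dist t x y = path_dist t y x" by (rule path_dist_commute)
  assume xy: "x \<in> mspace m" "y \<in> mspace m"
  show "path_dist t x y = 0 \<longleftrightarrow> x = y"
  proof
    assume "path_dist t x y = 0"
    then have "min 1 (t * mdist m x y) \<le> 0" using path_dist_lower[OF t xy] by simp
    then have "mdist m x y \<le> 0" using t by (simp add: min_def mult_le_0_iff split: if_splits)
    then show "x = y" using xy mdist_zero[of x m y] mdist_nonneg[of m x y] by linarith
  next
    assume "x = y"
    moreover have "path_dist t x x \<le> 0" using path_dist_le[OF _ jump_path.start[OF xy(1)]] t by simp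
    ultimately show "path_dist t x y = 0" using path_dist_nonneg[of t x x] t by simp
  qed
next
  fix x y z assume "t > 0" "x \<in> mspace m" "y \<in> mspace m" "z \<in> mspace m"
  then show "path_dist t x z \<le> path_dist t x y + path_dist t y z" using path_dist_triangle by simp
qed

definition admissible :: "real \<Rightarrow> ('y \<Rightarrow> 'y \<Rightarrow> real) \<Rightarrow> bool" where
  "admissible t \<rho> \<longleftrightarrow> Metric_space (mspace m) \<rho> \<and>
      (\<forall>x\<in>mspace m. \<forall>x'\<in>mspace m. \<rho> x x' \<le> t * mdist m x x') \<and>
      (\<forall>x\<in>mspace m. \<forall>s\<in>S. \<rho> x (\<phi> s x) \<le> 1)"

lemma warped_dist_admissible: "warped_dist m \<phi> S t x y = Sup {\<rho> x y | \<rho>. admissible t \<rho>}"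
  unfolding warped_dist_def admissible_def by simp

lemma admissible_path_dist: "t > 0 \<Longrightarrow> admissible t (path_dist t)"
  unfolding admissible_def
  using metric_path_dist path_dist_le[OF _ jump_path_dist] path_dist_le[OF _ jump_path_gen]
  by fastforce

lemma path_dist_le_warped_dist:
  assumes t: "t > 0" and xy: "x \<in> mspace m" "y \<in> mspace m"
  shows "path_dist t x y \<le> warped_dist m \<phi> S t x y"
  unfolding warped_dist_admissible
proof (rule cSup_upper)
  show "path_dist t x y \<in> {\<rho> x y |\<rho>. admissible t \<rho>}" using admissible_path_dist[OF t] by blast
  show "bdd_above {\<rho> x y |\<rho>. admissible t \<rho>}"
  proof (rule bdd_aboveI)
    fix r assume "r \<in> {\<rho> x y |\<rho>. admissible t \<rho>}"
    then obtain \<rho> where "admissible t \<rho>" "r = \<rho> x y" by blast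
    then show "r \<le> t * mdist m x y" using xy unfolding admissible_def by blast
  qed
qed

lemma warped_dist_le:
  "t > 0 \<Longrightarrow> (\<And>\<rho>. admissible t \<rho> \<Longrightarrow> \<rho> x y \<le> K) \<Longrightarrow> warped_dist m \<phi> S t x y \<le> K"
  unfolding warped_dist_admissible using admissible_path_dist by (intro cSup_least) blast+

lemma warped_dist_commute: "warped_dist m \<phi> S t x y = warped_dist m \<phi> S t y x"
proof -
  have comm: "\<rho> x y = \<rho> y x" if "admissible t \<rho>" for \<rho>
    using that unfolding admissible_def by (metis Metric_space.commute)
  have "{\<rho> x y |\<rho>. admissible t \<rho>} = {\<rho> y x |\<rho>. admissible t \<rho>}"
    by (intro Collect_cong) (metis comm)
  then show ?thesis unfolding warped_dist_admissible by simp
qed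

lemma admissible_word_ball:
  "admissible t \<rho> \<Longrightarrow> w \<in> word_ball n \<Longrightarrow> x \<in> mspace m \<Longrightarrow> \<rho> x (\<phi> w x) \<le> real n"
proof (induction n arbitrary: w)
  case 0
  then have "\<rho> x x = 0" using Metric_space.zero[of "mspace m" \<rho> x x] by (simp add: admissible_def)
  then show ?case using 0 act_one by simp
next
  case (Suc n)
  have ms: "Metric_space (mspace m) \<rho>" and x: "x \<in> mspace m"
    using Suc.prems unfolding admissible_def by blast+
  show ?case
  proof (cases "w \<in> word_ball n")
    case True
    then show ?thesis using Suc.IH[OF Suc.prems(1) True x] by simp
  next
    case False
    then obtain s v where sv: "s \<in> S" "v \<in> word_ball n" "w = s \<otimes> v" using Suc.prems(2) by auto
    have s: "s \<in> carrier G" and v: "v \<in> carrier G" using sv gens_carrier word_ball_carrier by auto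
    have vx: "\<phi> v x \<in> mspace m" using act_closed v x by blast
    have "\<rho> x (\<phi> w x) = \<rho> x (\<phi> s (\<phi> v x))" using sv act_mult s v x by simp
    also have "\<dots> \<le> \<rho> x (\<phi> v x) + \<rho> (\<phi> v x) (\<phi> s (\<phi> v x))"
      using Metric_space.triangle[OF ms x vx act_closed[OF s vx]] .
    also have "\<dots> \<le> real n + 1"
      using Suc.IH[OF Suc.prems(1) sv(2) x] Suc.prems(1) vx sv(1)
      unfolding admissible_def by fastforce
    finally show ?thesis by simp
  qed
qed

lemma warped_dist_word_ball:
  assumes "t > 0" "w \<in> word_ball n" "x \<in> mspace m"
  shows "warped_dist m \<phi> S t x (\<phi> w x) \<le> real n"
  using assms by (blast intro: warped_dist_le admissible_word_ball)

lemma warped_dist_act_bounded: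
  assumes "g \<in> carrier G"
  shows "\<exists>K\<ge>0. \<forall>t>0. \<forall>x\<in>mspace m. warped_dist m \<phi> S t x (\<phi> g x) \<le> K"
proof -
  obtain n where "g \<in> word_ball n" using carrier_word_ball[OF assms] by blast
  then show ?thesis using warped_dist_word_ball by (intro exI[of _ "real n"]) simp
qed

lemma act_continuous_at:
  assumes g: "g \<in> carrier G" and p: "p \<in> mspace m" and e: "e > 0"
  shows "\<exists>\<delta>>0. \<forall>z\<in>mspace m. mdist m p z < \<delta> \<longrightarrow> mdist m (\<phi> g p) (\<phi> g z) < e"
proof -
  have "continuous_map (Metric_space.mtopology (mspace m) (mdist m))
      (Metric_space.mtopology (mspace m) (mdist m)) (\<phi> g)"
    using continuous_map_act[OF g] unfolding mtopology_of_def by simp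
  then have "\<forall>a\<in>mspace m. \<forall>\<epsilon>>0. \<exists>\<delta>>0. \<forall>x. x \<in> mspace m \<and> mdist m a x < \<delta> \<longrightarrow>
      mdist m (\<phi> g a) (\<phi> g x) < \<epsilon>"
    unfolding Metric_space.metric_continuous_map[OF Metric_space_mspace_mdist Metric_space_mspace_mdist]
    by (rule conjunct2)
  then obtain \<delta> where "\<delta> > 0" "\<forall>x. x \<in> mspace m \<and> mdist m p x < \<delta> \<longrightarrow> mdist m (\<phi> g p) (\<phi> g x) < e"
    using p e by meson
  then show ?thesis by blast
qed

text \<open>Induction on n, using continuity of the generators at the finitely many points
  \<phi> \<eta> x with \<eta> of length at most n.\<close>
lemma short_jump_path_near_word_ball:
  assumes x: "x \<in> mspace m" and e: "\<epsilon> > 0"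
  shows "\<exists>\<delta>>0. \<forall>y k L. jump_path x y k L \<longrightarrow> k \<le> n \<longrightarrow> L < \<delta> \<longrightarrow>
           (\<exists>\<eta>\<in>word_ball n. mdist m y (\<phi> \<eta> x) < \<epsilon>)"
  using e
proof (induction n arbitrary: \<epsilon>)
  case 0
  show ?case
  proof (intro exI[of _ \<epsilon>] conjI allI impI)
    fix y k L assume p: "jump_path x y k L" and "k \<le> 0" and L: "L < \<epsilon>"
    then have "mdist m x y < \<epsilon>" using jump_path_0_dist by fastforce
    then show "\<exists>\<eta>\<in>word_ball 0. mdist m y (\<phi> \<eta> x) < \<epsilon>" using act_one[OF x] by (simp add: mdist_commute)
  qed (fact 0)
next
  case (Suc n)
  define Pts where "Pts = (\<lambda>\<eta>. \<phi> \<eta> x) ` word_ball n"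
  have Pts: "Pts \<subseteq> mspace m"
    unfolding Pts_def using word_ball_carrier[of n] act_closed[OF _ x] by blast
  define Q where "Q = (\<lambda>(s, p) \<delta>. \<forall>z\<in>mspace m. mdist m p z < \<delta> \<longrightarrow> mdist m (\<phi> s p) (\<phi> s z) < \<epsilon>/2)"
  have "\<exists>\<delta>>0. \<forall>a\<in>S \<times> Pts. Q a \<delta>"
  proof (rule finite_ex_pos_uniform)
    show "finite (S \<times> Pts)" unfolding Pts_def using finite_gens finite_word_ball by simp
    fix a assume "a \<in> S \<times> Pts"
    then obtain s p where a: "a = (s, p)" "s \<in> carrier G" "p \<in> mspace m"
      using gens_carrier Pts by blast
    then show "\<exists>\<delta>>0. Q a \<delta>" using act_continuous_at[OF a(2,3), of "\<epsilon>/2"] Suc.prems by (simp add: Q_def)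
  next
    fix a \<delta> \<delta>' assume "Q a \<delta>" "0 < \<delta>'" "\<delta>' \<le> \<delta>"
    then show "Q a \<delta>'" by (auto simp: Q_def split: prod.splits)
  qed
  then obtain \<delta>1 where d1: "\<delta>1 > 0" "\<forall>a\<in>S \<times> Pts. Q a \<delta>1" by blast
  obtain \<delta>0 where d0: "\<delta>0 > 0" "\<forall>y k L. jump_path x y k L \<longrightarrow> k \<le> n \<longrightarrow> L < \<delta>0 \<longrightarrow>
      (\<exists>\<eta>\<in>word_ball n. mdist m y (\<phi> \<eta> x) < min \<delta>1 (\<epsilon>/2))"
    using Suc.IH[of "min \<delta>1 (\<epsilon>/2)"] d1(1) Suc.prems by auto
  show ?case
  proof (intro exI[of _ "min \<delta>0 (\<epsilon>/2)"] conjI allI impI)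
    show "min \<delta>0 (\<epsilon>/2) > 0" using d0 Suc.prems by simp
    fix y k L assume p: "jump_path x y k L" and k: "k \<le> Suc n" and L: "L < min \<delta>0 (\<epsilon>/2)"
    show "\<exists>\<eta>\<in>word_ball (Suc n). mdist m y (\<phi> \<eta> x) < \<epsilon>"
    proof (cases "k \<le> n")
      case True
      then obtain \<eta> where \<eta>: "\<eta> \<in> word_ball n" "mdist m y (\<phi> \<eta> x) < min \<delta>1 (\<epsilon>/2)"
        using d0 p L by force
      then have "mdist m y (\<phi> \<eta> x) < \<epsilon>" using Suc.prems by simp
      then show ?thesis using \<eta>(1) by auto
    next
      case False
      with k p obtain b s L1 L2 where b: "jump_path x b n L1" "s \<in> S" "mdist m (\<phi> s b) y \<le> L2"
        "L1 + L2 \<le> L" "L2 \<ge> 0"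
        by (metis le_SucE jump_path_SucE)
      have L1: "L1 < \<delta>0" and L2: "L2 < \<epsilon>/2" using b L jump_path_mspace[OF b(1)] by auto
      obtain \<eta> where \<eta>: "\<eta> \<in> word_ball n" "mdist m b (\<phi> \<eta> x) < min \<delta>1 (\<epsilon>/2)"
        using d0 b(1) L1 by blast
      have bM: "b \<in> mspace m" using jump_path_mspace[OF b(1)] by blast
      have s: "s \<in> carrier G" and \<eta>G: "\<eta> \<in> carrier G"
        using b(2) \<eta>(1) gens_carrier word_ball_carrier by auto
      have "Q (s, \<phi> \<eta> x) \<delta>1" using d1(2) b(2) \<eta>(1) unfolding Pts_def by blast
      then have c1: "mdist m (\<phi> s (\<phi> \<eta> x)) (\<phi> s b) < \<epsilon>/2"
        using \<eta>(2) bM unfolding Q_def by (simp add: mdist_commute)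
      have yM: "y \<in> mspace m" using jump_path_mspace[OF p] by blast
      have "mdist m y (\<phi> s (\<phi> \<eta> x)) \<le> mdist m y (\<phi> s b) + mdist m (\<phi> s b) (\<phi> s (\<phi> \<eta> x))"
        using mdist_triangle[OF yM act_closed[OF s bM] act_closed[OF s act_closed[OF \<eta>G x]]] .
      also have "\<dots> < \<epsilon>" using c1 b(3) L2 by (simp add: mdist_commute)
      finally have "mdist m y (\<phi> (s \<otimes> \<eta>) x) < \<epsilon>" using act_mult[OF s \<eta>G x] by simp
      then show ?thesis using word_ball_gen_mult[OF b(2) \<eta>(1)] by blast
    qed
  qed
qed

text \<open>For large t a near-optimal jump path from x into Z has at most K jumps and very short
  moves, so it ends near one of the finitely many points \<phi> \<eta> x, which the closed set Z misses
  by a positive distance.\<close>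
lemma word_ball_reaches_closedin:
  assumes x: "x \<in> mspace m" and Z: "closedin (mtopology_of m) Z" and K: "K \<ge> 0"
    and close: "\<And>t. t > 0 \<Longrightarrow> \<exists>z\<in>Z. warped_dist m \<phi> S t x z \<le> K"
  shows "\<exists>\<eta>\<in>word_ball (nat \<lceil>K\<rceil>). \<phi> \<eta> x \<in> Z"
proof (rule ccontr)
  assume far: "\<not> (\<exists>\<eta>\<in>word_ball (nat \<lceil>K\<rceil>). \<phi> \<eta> x \<in> Z)"
  define N where "N = nat \<lceil>K\<rceil>"
  have ZM: "Z \<subseteq> mspace m" using closedin_subset[OF Z] by simp
  have op: "openin (Metric_space.mtopology (mspace m) (mdist m)) (mspace m - Z)"
    using Z unfolding closedin_def mtopology_of_def
    by (simp add: Metric_space.topspace_mtopology[OF Metric_space_mspace_mdist])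
  have "\<exists>r>0. \<forall>\<eta>\<in>word_ball N. \<forall>z\<in>Z. \<not> mdist m z (\<phi> \<eta> x) < r"
  proof (rule finite_ex_pos_uniform[where P = "\<lambda>\<eta> r. \<forall>z\<in>Z. \<not> mdist m z (\<phi> \<eta> x) < r",
        OF finite_word_ball])
    fix \<eta> assume \<eta>: "\<eta> \<in> word_ball N"
    have pZ: "\<phi> \<eta> x \<in> mspace m - Z" using far \<eta> act_closed word_ball_carrier x unfolding N_def by blast
    then obtain r where r: "r > 0" "Metric_space.mball (mspace m) (mdist m) (\<phi> \<eta> x) r \<subseteq> mspace m - Z"
      using op unfolding Metric_space.openin_mtopology[OF Metric_space_mspace_mdist] by blast
    have "\<forall>z\<in>Z. \<not> mdist m z (\<phi> \<eta> x) < r"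
    proof (intro ballI notI)
      fix z assume z: "z \<in> Z" and d: "mdist m z (\<phi> \<eta> x) < r"
      then have "z \<in> Metric_space.mball (mspace m) (mdist m) (\<phi> \<eta> x) r"
        using ZM pZ
        by (simp add: Metric_space.in_mball[OF Metric_space_mspace_mdist] mdist_commute subsetD)
      then show False using r z by blast
    qed
    then show "\<exists>r>0. \<forall>z\<in>Z. \<not> mdist m z (\<phi> \<eta> x) < r" using r by blast
  qed auto
  then obtain r0 where r0: "r0 > 0" "\<forall>\<eta>\<in>word_ball N. \<forall>z\<in>Z. \<not> mdist m z (\<phi> \<eta> x) < r0" by blast
  obtain \<delta> where d: "\<delta> > 0" "\<forall>y k L. jump_path x y k L \<longrightarrow> k \<le> N \<longrightarrow> L < \<delta> \<longrightarrow>
      (\<exists>\<eta>\<in>word_ball N. mdist m y (\<phi> \<eta> x) < r0)"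
    using short_jump_path_near_word_ball[OF x r0(1)] by blast
  define t where "t = 2 * (K + 1) / \<delta>"
  have t: "t > 0" unfolding t_def using d K by simp
  obtain z where z: "z \<in> Z" "warped_dist m \<phi> S t x z \<le> K" using close[OF t] by blast
  have zM: "z \<in> mspace m" using z ZM by blast
  have "path_dist t x z < K + 1" using path_dist_le_warped_dist[OF t x zM] z by simp
  then obtain k L where p: "jump_path x z k L" "t * L + real k < K + 1"
    using path_dist_greatest[OF x zM, of "K + 1" t] by (meson not_less)
  have "t * L \<ge> 0" using t jump_path_mspace[OF p(1)] by simp
  then have "real k < K + 1" using p by linarith
  then have kN: "k \<le> N" unfolding N_def by linarith
  have "L < (K + 1) / t" using p t \<open>real k < K + 1\<close> by (simp add: field_simps)
  also have "(K + 1) / t = \<delta> / 2" unfolding t_def using d K by (simp add: field_simps)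
  finally have "L < \<delta>" using d by simp
  then obtain \<eta> where "\<eta> \<in> word_ball N" "mdist m z (\<phi> \<eta> x) < r0" using d p kN by blast
  then show False using r0 z by blast
qed

lemma word_ball_reaches_point:
  assumes x: "x \<in> mspace m" and y: "y \<in> mspace m" and K: "K \<ge> 0"
    and close: "\<And>t. t > 0 \<Longrightarrow> warped_dist m \<phi> S t x y \<le> K"
  shows "\<exists>\<eta>\<in>word_ball (nat \<lceil>K\<rceil>). \<phi> \<eta> x = y"
  using word_ball_reaches_closedin[OF x closedin_Hausdorff_singleton[OF Hausdorff_space_mtopology_of] K]
    y close by simp

end

locale warped_cone_qi =
  fixes G :: "'g monoid" and D :: "'d monoid"
    and mY :: "'y metric" and mX :: "'x metric"
    and \<phi> :: "'g \<Rightarrow> 'y \<Rightarrow> 'y" and \<psi> :: "'d \<Rightarrow> 'x \<Rightarrow> 'x"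
    and SG :: "'g set" and SD :: "'d set"
    and f :: "'y \<Rightarrow> 'x"
    and I :: "'i set" and t \<tau> :: "'i \<Rightarrow> real" and C A :: real
  assumes G: "group G" and D: "group D"
    and SG: "fin_sym_gen_set G SG" and SD: "fin_sym_gen_set D SD"
    and Ycomp: "compact_space (mtopology_of mY)"
    and Yconn: "connected_space (mtopology_of mY)"
    and actY: "continuous_action G mY \<phi>"
    and actX: "continuous_action D mX \<psi>"
    and free_orbit: "\<exists>y\<in>mspace mY. free_point G \<phi> y"
    and free_act: "\<forall>x\<in>mspace mX. free_point D \<psi> x"
    and f_cont: "continuous_map (mtopology_of mY) (mtopology_of mX) f"
    and t_surj: "t ` I = {0<..}" and \<tau>_surj: "\<tau> ` I = {0<..}"
    and C: "C \<ge> 1" and A: "A \<ge> 0"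
    and qi_lower: "\<forall>i\<in>I. \<forall>y\<in>mspace mY. \<forall>y'\<in>mspace mY.
        warped_dist mY \<phi> SG (t i) y y' / C - A
          \<le> warped_dist mX \<psi> SD (\<tau> i) (f y) (f y')"
    and qi_upper: "\<forall>i\<in>I. \<forall>y\<in>mspace mY. \<forall>y'\<in>mspace mY.
        warped_dist mX \<psi> SD (\<tau> i) (f y) (f y')
          \<le> C * warped_dist mY \<phi> SG (t i) y y' + A"
    and qi_dense: "\<forall>i\<in>I. \<forall>x\<in>mspace mX. \<exists>y\<in>mspace mY.
        warped_dist mX \<psi> SD (\<tau> i) (f y) x \<le> A"

sublocale warped_cone_qi \<subseteq> wY: warped_action G mY \<phi> SG
  by (intro warped_action.intro warped_action_axioms.intro G SG actY)

sublocale warped_cone_qi \<subseteq> wX: warped_action D mX \<psi> SD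
  by (intro warped_action.intro warped_action_axioms.intro D SD actX)

context warped_cone_qi
begin

abbreviation im_f :: "'x set" where "im_f \<equiv> f ` mspace mY"

abbreviation D' :: "'d set" where "D' \<equiv> {\<delta> \<in> carrier D. \<psi> \<delta> ` im_f = im_f}"

lemma f_mspace: "y \<in> mspace mY \<Longrightarrow> f y \<in> mspace mX"
  using continuous_map_image_subset_topspace[OF f_cont] by auto

lemma im_f_subset: "im_f \<subseteq> mspace mX"
  using f_mspace by blast

lemma t_attains: "r > 0 \<Longrightarrow> \<exists>i\<in>I. t i = r"
  using t_surj by (metis greaterThan_iff imageE)

lemma \<tau>_attains: "r > 0 \<Longrightarrow> \<exists>i\<in>I. \<tau> i = r"
  using \<tau>_surj by (metis greaterThan_iff imageE)

lemma t_pos: "i \<in> I \<Longrightarrow> t i > 0"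
  using t_surj by auto

lemma \<tau>_pos: "i \<in> I \<Longrightarrow> \<tau> i > 0"
  using \<tau>_surj by auto

lemma free_X: "a \<in> carrier D \<Longrightarrow> b \<in> carrier D \<Longrightarrow> x \<in> mspace mX \<Longrightarrow> \<psi> a x = \<psi> b x \<Longrightarrow> a = b"
  using wX.free_point_act_eqD free_act by blast

text \<open>The upper quasi-isometry bound at every scale turns the bounded displacement of
  \<gamma> in the warped cone of Y into a bounded displacement in the warped cone of X.\<close>
lemma equivariance_bounded:
  assumes g: "\<gamma> \<in> carrier G"
  shows "\<exists>N. \<forall>y\<in>mspace mY. \<exists>\<eta>\<in>wX.word_ball N. \<psi> \<eta> (f y) = f (\<phi> \<gamma> y)"
proof -
  obtain K where K: "K \<ge> 0" "\<forall>r>0. \<forall>y\<in>mspace mY. warped_dist mY \<phi> SG r y (\<phi> \<gamma> y) \<le> K"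
    using wY.warped_dist_act_bounded[OF g] by blast
  have "\<exists>\<eta>\<in>wX.word_ball (nat \<lceil>C * K + A\<rceil>). \<psi> \<eta> (f y) = f (\<phi> \<gamma> y)" if y: "y \<in> mspace mY" for y
  proof (rule wX.word_ball_reaches_point)
    have gy: "\<phi> \<gamma> y \<in> mspace mY" using wY.act_closed[OF g y] .
    then show "f y \<in> mspace mX" "f (\<phi> \<gamma> y) \<in> mspace mX" using f_mspace y by auto
    show "C * K + A \<ge> 0" using K C A by simp
    fix r :: real assume "r > 0"
    then obtain i where i: "i \<in> I" "\<tau> i = r" using \<tau>_attains by blast
    have "warped_dist mX \<psi> SD (\<tau> i) (f y) (f (\<phi> \<gamma> y)) \<le> C * warped_dist mY \<phi> SG (t i) y (\<phi> \<gamma> y) + A"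
      using qi_upper i y gy by blast
    also have "\<dots> \<le> C * K + A" using K t_pos[OF i(1)] y C by (simp add: mult_left_mono)
    finally show "warped_dist mX \<psi> SD r (f y) (f (\<phi> \<gamma> y)) \<le> C * K + A" using i by simp
  qed
  then show ?thesis by blast
qed

text \<open>The sets where f \<circ> \<gamma> agrees with \<eta> \<circ> f, for \<eta> in the finite ball found above, are
  closed, pairwise disjoint by freeness of the action on X, and cover Y; connectedness of Y
  leaves only one of them.\<close>
lemma ex_equivariant_element:
  assumes g: "\<gamma> \<in> carrier G"
  shows "\<exists>\<eta>\<in>carrier D. \<forall>y\<in>mspace mY. f (\<phi> \<gamma> y) = \<psi> \<eta> (f y)"
proof -
  obtain N where N: "\<forall>y\<in>mspace mY. \<exists>\<eta>\<in>wX.word_ball N. \<psi> \<eta> (f y) = f (\<phi> \<gamma> y)"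
    using equivariance_bounded[OF g] by blast
  obtain y0 where y0: "y0 \<in> mspace mY" using free_orbit by blast
  define B where "B \<eta> = {y \<in> topspace (mtopology_of mY). (f \<circ> \<phi> \<gamma>) y = (\<psi> \<eta> \<circ> f) y}" for \<eta>
  have "\<exists>\<eta>\<in>wX.word_ball N. B \<eta> = topspace (mtopology_of mY)"
  proof (rule connected_space_finite_closed_partition[OF Yconn wX.finite_word_ball])
    fix \<eta> assume "\<eta> \<in> wX.word_ball N"
    then have \<eta>: "\<eta> \<in> carrier D" using wX.word_ball_carrier by blast
    show "closedin (mtopology_of mY) (B \<eta>)" unfolding B_def
      by (rule closedin_continuous_maps_eq[OF Hausdorff_space_mtopology_of
            continuous_map_compose[OF wY.continuous_map_act[OF g] f_cont]
            continuous_map_compose[OF f_cont wX.continuous_map_act[OF \<eta>]]])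
  next
    show "disjoint_family_on B (wX.word_ball N)"
      unfolding disjoint_family_on_def
    proof (intro ballI impI, rule ccontr)
      fix a b assume a: "a \<in> wX.word_ball N" and b: "b \<in> wX.word_ball N" and "a \<noteq> b"
        and "B a \<inter> B b \<noteq> {}"
      then obtain y where "y \<in> B a" "y \<in> B b" by blast
      then have "y \<in> mspace mY" "\<psi> a (f y) = \<psi> b (f y)" unfolding B_def by auto
      then have "a = b" using free_X f_mspace a b wX.word_ball_carrier by blast
      with \<open>a \<noteq> b\<close> show False ..
    qed
    show "topspace (mtopology_of mY) \<subseteq> \<Union> (B ` wX.word_ball N)"
    proof
      fix y assume "y \<in> topspace (mtopology_of mY)"
      then obtain \<eta> where "\<eta> \<in> wX.word_ball N" "\<psi> \<eta> (f y) = f (\<phi> \<gamma> y)" using N by auto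
      then show "y \<in> \<Union> (B ` wX.word_ball N)"
        unfolding B_def using \<open>y \<in> topspace _\<close> by (auto intro!: bexI[of _ \<eta>])
    qed
    show "y0 \<in> topspace (mtopology_of mY)" using y0 by simp
  qed
  then show ?thesis unfolding B_def using wX.word_ball_carrier by fastforce
qed

definition induced_hom :: "'g \<Rightarrow> 'd" where
  "induced_hom \<gamma> = (SOME \<eta>. \<eta> \<in> carrier D \<and> (\<forall>y\<in>mspace mY. f (\<phi> \<gamma> y) = \<psi> \<eta> (f y)))"

lemma induced_hom_carrier: "\<gamma> \<in> carrier G \<Longrightarrow> induced_hom \<gamma> \<in> carrier D"
  and induced_hom_equivariant:
    "\<gamma> \<in> carrier G \<Longrightarrow> y \<in> mspace mY \<Longrightarrow> f (\<phi> \<gamma> y) = \<psi> (induced_hom \<gamma>) (f y)"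
  using someI_ex[OF ex_equivariant_element[unfolded Bex_def]]
  unfolding induced_hom_def by blast+

lemma induced_hom_unique:
  "\<gamma> \<in> carrier G \<Longrightarrow> \<eta> \<in> carrier D \<Longrightarrow> y \<in> mspace mY \<Longrightarrow> f (\<phi> \<gamma> y) = \<psi> \<eta> (f y) \<Longrightarrow>
    induced_hom \<gamma> = \<eta>"
  using free_X[OF induced_hom_carrier _ f_mspace] induced_hom_equivariant by metis

lemma induced_hom_hom: "induced_hom \<in> hom G D"
proof -
  obtain y0 where y0: "y0 \<in> mspace mY" using free_orbit by blast
  have "induced_hom (a \<otimes>\<^bsub>G\<^esub> b) = induced_hom a \<otimes>\<^bsub>D\<^esub> induced_hom b"
    if a: "a \<in> carrier G" and b: "b \<in> carrier G" for a b
  proof (rule induced_hom_unique[OF _ _ y0])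
    show "a \<otimes>\<^bsub>G\<^esub> b \<in> carrier G" using a b by simp
    show "induced_hom a \<otimes>\<^bsub>D\<^esub> induced_hom b \<in> carrier D" using induced_hom_carrier a b by simp
    have by0: "\<phi> b y0 \<in> mspace mY" using wY.act_closed[OF b y0] .
    have "f (\<phi> (a \<otimes>\<^bsub>G\<^esub> b) y0) = f (\<phi> a (\<phi> b y0))" using wY.act_mult[OF a b y0] by simp
    also have "\<dots> = \<psi> (induced_hom a) (\<psi> (induced_hom b) (f y0))"
      using induced_hom_equivariant[OF a by0] induced_hom_equivariant[OF b y0] by simp
    also have "\<dots> = \<psi> (induced_hom a \<otimes>\<^bsub>D\<^esub> induced_hom b) (f y0)"
      using wX.act_mult[OF induced_hom_carrier[OF a] induced_hom_carrier[OF b] f_mspace[OF y0]] by simp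
    finally show "f (\<phi> (a \<otimes>\<^bsub>G\<^esub> b) y0) = \<psi> (induced_hom a \<otimes>\<^bsub>D\<^esub> induced_hom b) (f y0)" .
  qed
  then show ?thesis unfolding hom_def using induced_hom_carrier by auto
qed

lemma group_hom_induced_hom: "group_hom G D induced_hom"
  by (intro group_hom.intro group_hom_axioms.intro G D induced_hom_hom)

text \<open>Dually, the lower quasi-isometry bound lifts a translation by a word of length n in
  the cone of X to a word of bounded length in the cone of Y.\<close>
lemma lift_word_ball:
  assumes a: "a \<in> wX.word_ball n" and y: "y \<in> mspace mY" and y': "y' \<in> mspace mY"
    and e: "\<psi> a (f y) = f y'"
  shows "\<exists>\<gamma>\<in>wY.word_ball (nat \<lceil>C * (real n + A)\<rceil>). y' = \<phi> \<gamma> y \<and> induced_hom \<gamma> = a"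
proof -
  have "\<exists>\<gamma>\<in>wY.word_ball (nat \<lceil>C * (real n + A)\<rceil>). \<phi> \<gamma> y = y'"
  proof (rule wY.word_ball_reaches_point[OF y y'])
    show "C * (real n + A) \<ge> 0" using C A by simp
    fix r :: real assume "r > 0"
    then obtain i where i: "i \<in> I" "t i = r" using t_attains by blast
    have "warped_dist mY \<phi> SG (t i) y y' / C - A \<le> warped_dist mX \<psi> SD (\<tau> i) (f y) (f y')"
      using qi_lower i y y' by blast
    also have "\<dots> \<le> real n"
      using wX.warped_dist_word_ball[OF \<tau>_pos[OF i(1)] a f_mspace[OF y]] e by simp
    finally have "warped_dist mY \<phi> SG (t i) y y' / C \<le> real n + A" by simp
    then show "warped_dist mY \<phi> SG r y y' \<le> C * (real n + A)"
      using C i by (simp add: divide_le_eq mult.commute)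
  qed
  then obtain \<gamma> where g: "\<gamma> \<in> wY.word_ball (nat \<lceil>C * (real n + A)\<rceil>)" "\<phi> \<gamma> y = y'" by blast
  have "induced_hom \<gamma> = a"
  proof (rule induced_hom_unique[OF _ _ y])
    show "\<gamma> \<in> carrier G" "a \<in> carrier D"
      using g(1) a wY.word_ball_carrier wX.word_ball_carrier by auto
    show "f (\<phi> \<gamma> y) = \<psi> a (f y)" using g(2) e by simp
  qed
  then show ?thesis using g by blast
qed

lemma lift_translation:
  assumes "a \<in> carrier D" "y \<in> mspace mY" "y' \<in> mspace mY" "\<psi> a (f y) = f y'"
  shows "\<exists>\<gamma>\<in>carrier G. y' = \<phi> \<gamma> y \<and> induced_hom \<gamma> = a"
proof -
  obtain n where "a \<in> wX.word_ball n" using wX.carrier_word_ball[OF assms(1)] by blast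
  from lift_word_ball[OF this assms(2-4)] show ?thesis using wY.word_ball_carrier by blast
qed

lemma D'_eq_image: "D' = induced_hom ` carrier G"
proof
  show "induced_hom ` carrier G \<subseteq> D'"
  proof
    fix \<delta> assume "\<delta> \<in> induced_hom ` carrier G"
    then obtain \<gamma> where g: "\<gamma> \<in> carrier G" "\<delta> = induced_hom \<gamma>" by blast
    have "\<psi> \<delta> ` im_f = f ` \<phi> \<gamma> ` mspace mY"
      unfolding image_image
      by (intro image_cong) (simp_all add: g(2) induced_hom_equivariant[OF g(1)])
    also have "\<dots> = im_f" using wY.act_image[OF g(1)] by simp
    finally show "\<delta> \<in> D'" using g induced_hom_carrier by blast
  qed
next
  show "D' \<subseteq> induced_hom ` carrier G"
  proof
    fix \<delta> assume d: "\<delta> \<in> D'"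
    obtain y0 where y0: "y0 \<in> mspace mY" using free_orbit by blast
    have "\<psi> \<delta> (f y0) \<in> im_f" using d y0 by blast
    then obtain y' where y': "y' \<in> mspace mY" "\<psi> \<delta> (f y0) = f y'" by blast
    then obtain \<gamma> where "\<gamma> \<in> carrier G" "induced_hom \<gamma> = \<delta>"
      using lift_translation[OF _ y0 y'] d by blast
    then show "\<delta> \<in> induced_hom ` carrier G" by (metis imageI)
  qed
qed

lemma subgroup_D': "subgroup D' D"
  unfolding D'_eq_image by (rule group_hom.img_is_subgroup[OF group_hom_induced_hom])

text \<open>Lifting the identity of D at a free point y0 shows that each kernel element moves y0
  like some word of bounded length; freeness at y0 makes the two equal.\<close>
lemma finite_kernel: "finite (kernel G D induced_hom)"
proof -
  obtain y0 where y0: "y0 \<in> mspace mY" "free_point G \<phi> y0" using free_orbit by blast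
  have "kernel G D induced_hom \<subseteq> wY.word_ball (nat \<lceil>C * (real 0 + A)\<rceil>)"
  proof
    fix \<gamma> assume "\<gamma> \<in> kernel G D induced_hom"
    then have g: "\<gamma> \<in> carrier G" and one: "induced_hom \<gamma> = \<one>\<^bsub>D\<^esub>" unfolding kernel_def by auto
    have gy: "\<phi> \<gamma> y0 \<in> mspace mY" using wY.act_closed[OF g y0(1)] .
    have "\<psi> \<one>\<^bsub>D\<^esub> (f y0) = f (\<phi> \<gamma> y0)" using induced_hom_equivariant[OF g y0(1)] one by simp
    moreover have "\<one>\<^bsub>D\<^esub> \<in> wX.word_ball 0" by simp
    ultimately obtain \<eta> where e: "\<eta> \<in> wY.word_ball (nat \<lceil>C * (real 0 + A)\<rceil>)" "\<phi> \<gamma> y0 = \<phi> \<eta> y0"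
      using lift_word_ball[OF _ y0(1) gy] by blast
    then have "\<gamma> = \<eta>" using wY.free_point_act_eqD[OF y0(2,1) g _ e(2)] wY.word_ball_carrier by blast
    then show "\<gamma> \<in> wY.word_ball (nat \<lceil>C * (real 0 + A)\<rceil>)" using e by simp
  qed
  then show ?thesis using wY.finite_word_ball finite_subset by blast
qed

definition kernel_orbit :: "'y \<Rightarrow> 'y set" where
  "kernel_orbit y = {\<phi> g y | g. g \<in> kernel G D induced_hom}"

definition fibre :: "'x \<Rightarrow> 'y set" where
  "fibre x = {z \<in> mspace mY. f z = x}"

lemma kernel_orbit_eq_fibre:
  assumes y: "y \<in> mspace mY"
  shows "kernel_orbit y = fibre (f y)"
proof (intro equalityI subsetI)
  fix z assume "z \<in> kernel_orbit y"
  then obtain g where g: "g \<in> carrier G" "induced_hom g = \<one>\<^bsub>D\<^esub>" "z = \<phi> g y"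
    by (auto simp: kernel_orbit_def kernel_def)
  then show "z \<in> fibre (f y)"
    using induced_hom_equivariant[OF g(1) y] wX.act_one[OF f_mspace[OF y]] wY.act_closed[OF g(1) y]
    by (simp add: fibre_def)
next
  fix z assume "z \<in> fibre (f y)"
  then have z: "z \<in> mspace mY" "\<psi> \<one>\<^bsub>D\<^esub> (f y) = f z"
    using wX.act_one[OF f_mspace[OF y]] by (auto simp: fibre_def)
  then obtain \<gamma> where "\<gamma> \<in> carrier G" "z = \<phi> \<gamma> y" "induced_hom \<gamma> = \<one>\<^bsub>D\<^esub>"
    using lift_translation[OF wX.one_closed y] by blast
  then show "z \<in> kernel_orbit y" by (auto simp: kernel_orbit_def kernel_def)
qed

lemma quotient_map_f: "quotient_map (mtopology_of mY) (subtopology (mtopology_of mX) im_f) f"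
proof (rule continuous_closed_imp_quotient_map)
  show c: "continuous_map (mtopology_of mY) (subtopology (mtopology_of mX) im_f) f"
    using f_cont by (simp add: continuous_map_in_subtopology)
  show "closed_map (mtopology_of mY) (subtopology (mtopology_of mX) im_f) f"
    by (rule continuous_imp_closed_map[OF c Ycomp
          Hausdorff_space_subtopology[OF Hausdorff_space_mtopology_of]])
  show "f ` topspace (mtopology_of mY) = topspace (subtopology (mtopology_of mX) im_f)"
    using f_mspace by auto
qed

lemma homeomorphic_map_fibre:
  "homeomorphic_map (subtopology (mtopology_of mX) im_f)
     (quotient_topology (mtopology_of mY) kernel_orbit) fibre"
  unfolding homeomorphic_map_def
proof
  have "quotient_map (mtopology_of mY) (quotient_topology (mtopology_of mY) kernel_orbit) (fibre \<circ> f)"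
    by (rule quotient_map_eq[OF quotient_map_quotient_topology]) (simp add: kernel_orbit_eq_fibre)
  then show "quotient_map (subtopology (mtopology_of mX) im_f)
      (quotient_topology (mtopology_of mY) kernel_orbit) fibre"
    using quotient_map_compose_eq[OF quotient_map_f] by blast
  show "inj_on fibre (topspace (subtopology (mtopology_of mX) im_f))"
  proof (rule inj_onI)
    fix x x' assume "x' \<in> topspace (subtopology (mtopology_of mX) im_f)" and e: "fibre x = fibre x'"
    then obtain y' where y': "y' \<in> mspace mY" "x' = f y'" by auto
    then have "y' \<in> fibre x" using e by (simp add: fibre_def)
    then show "x = x'" using y' by (simp add: fibre_def)
  qed
qed

lemma fibre_equivariant:
  assumes g: "\<gamma> \<in> carrier G" and x: "x \<in> im_f"
  shows "fibre (\<psi> (induced_hom \<gamma>) x) = \<phi> \<gamma> ` fibre x"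
proof (intro equalityI subsetI)
  obtain y where y: "y \<in> mspace mY" "x = f y" using x by blast
  fix w assume "w \<in> fibre (\<psi> (induced_hom \<gamma>) x)"
  then have w: "w \<in> mspace mY" "f w = \<psi> (induced_hom \<gamma>) (f y)" unfolding fibre_def using y by auto
  define z where "z = \<phi> (inv\<^bsub>G\<^esub> \<gamma>) w"
  have z: "z \<in> mspace mY" unfolding z_def using wY.act_closed[OF _ w(1)] g by simp
  have wz: "w = \<phi> \<gamma> z" unfolding z_def using wY.act_act_inv[OF g w(1)] by simp
  have "\<psi> (induced_hom \<gamma>) (f z) = \<psi> (induced_hom \<gamma>) (f y)"
    using induced_hom_equivariant[OF g z] wz w(2) by simp
  then have "f z = f y"
    by (rule inj_onD[OF wX.inj_on_act[OF induced_hom_carrier[OF g]]]) (use f_mspace z y(1) in auto)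
  then show "w \<in> \<phi> \<gamma> ` fibre x" using wz z y by (auto simp: fibre_def)
next
  fix w assume "w \<in> \<phi> \<gamma> ` fibre x"
  then obtain z where z: "z \<in> mspace mY" "f z = x" "w = \<phi> \<gamma> z" unfolding fibre_def by auto
  then show "w \<in> fibre (\<psi> (induced_hom \<gamma>) x)"
    using induced_hom_equivariant[OF g z(1)] wY.act_closed[OF g z(1)] by (simp add: fibre_def)
qed

definition translate :: "'d \<Rightarrow> 'x set" where
  "translate a = \<psi> a ` im_f"

lemma closedin_translate: "a \<in> carrier D \<Longrightarrow> closedin (mtopology_of mX) (translate a)"
proof -
  assume a: "a \<in> carrier D"
  have "compactin (mtopology_of mY) (topspace (mtopology_of mY))"
    using Ycomp compact_space_def by blast
  then have "compactin (mtopology_of mX) (translate a)"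
    unfolding translate_def
    using image_compactin[OF _ continuous_map_compose[OF f_cont wX.continuous_map_act[OF a]]]
    by (simp add: image_image)
  then show ?thesis using compactin_imp_closedin[OF Hausdorff_space_mtopology_of] by blast
qed

lemma connectedin_translate: "a \<in> carrier D \<Longrightarrow> connectedin (mtopology_of mX) (translate a)"
  unfolding translate_def
  using connectedin_continuous_map_image[OF continuous_map_compose[OF f_cont wX.continuous_map_act]
      connectedin_topspace[THEN iffD2, OF Yconn]]
  by (simp add: image_image)

lemma translate_subset: "a \<in> carrier D \<Longrightarrow> translate a \<subseteq> mspace mX"
  unfolding translate_def using wX.act_closed im_f_subset by blast

lemma translate_nonempty: "translate a \<noteq> {}"
  unfolding translate_def using free_orbit by blast

lemma translate_one: "translate \<one>\<^bsub>D\<^esub> = im_f"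
  unfolding translate_def using wX.act_one im_f_subset by (auto simp: subset_iff image_iff)

lemma image_translate:
  assumes a: "a \<in> carrier D" and b: "b \<in> carrier D"
  shows "\<psi> a ` translate b = translate (a \<otimes>\<^bsub>D\<^esub> b)"
proof -
  have "\<psi> a (\<psi> b x) = \<psi> (a \<otimes>\<^bsub>D\<^esub> b) x" if "x \<in> im_f" for x
    using wX.act_mult[OF a b] im_f_subset that by auto
  then show ?thesis unfolding translate_def image_image by (intro image_cong) simp_all
qed

lemma translate_meets_im_f:
  assumes a: "a \<in> carrier D" and ne: "translate a \<inter> im_f \<noteq> {}"
  shows "a \<in> D'"
proof -
  obtain y y' where "y \<in> mspace mY" "y' \<in> mspace mY" "\<psi> a (f y) = f y'"
    using ne unfolding translate_def by blast
  then obtain \<gamma> where "\<gamma> \<in> carrier G" "induced_hom \<gamma> = a" using lift_translation[OF a] by blast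
  then show ?thesis unfolding D'_eq_image by (metis imageI)
qed

lemma translate_overlap:
  assumes a: "a \<in> carrier D" and b: "b \<in> carrier D" and ne: "translate a \<inter> translate b \<noteq> {}"
  shows "translate a = translate b"
proof -
  have ib: "inv\<^bsub>D\<^esub> b \<in> carrier D" and c: "inv\<^bsub>D\<^esub> b \<otimes>\<^bsub>D\<^esub> a \<in> carrier D" using a b by auto
  have "\<psi> (inv\<^bsub>D\<^esub> b) ` translate b = im_f"
    using image_translate[OF ib b] b translate_one by simp
  then have "\<psi> (inv\<^bsub>D\<^esub> b) ` (translate a \<inter> translate b) \<subseteq> translate (inv\<^bsub>D\<^esub> b \<otimes>\<^bsub>D\<^esub> a) \<inter> im_f"
    using image_translate[OF ib a] by blast
  then have "inv\<^bsub>D\<^esub> b \<otimes>\<^bsub>D\<^esub> a \<in> D'" using translate_meets_im_f[OF c] ne by blast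
  then have "translate (inv\<^bsub>D\<^esub> b \<otimes>\<^bsub>D\<^esub> a) = im_f" by (simp add: translate_def)
  then have "\<psi> b ` translate (inv\<^bsub>D\<^esub> b \<otimes>\<^bsub>D\<^esub> a) = translate b" by (simp add: translate_def)
  then show ?thesis using image_translate[OF b c] a b by (simp add: wX.m_assoc[symmetric])
qed

lemma mspace_subset_translates:
  assumes x: "x \<in> mspace mX"
  shows "\<exists>\<eta>\<in>wX.word_ball (nat \<lceil>A\<rceil>). x \<in> translate (inv\<^bsub>D\<^esub> \<eta>)"
proof -
  have "\<exists>\<eta>\<in>wX.word_ball (nat \<lceil>A\<rceil>). \<psi> \<eta> x \<in> im_f"
  proof (rule wX.word_ball_reaches_closedin[OF x _ A])
    show "closedin (mtopology_of mX) im_f" using closedin_translate[of "\<one>\<^bsub>D\<^esub>"] translate_one by simp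
    fix r :: real assume "r > 0"
    then obtain i where i: "i \<in> I" "\<tau> i = r" using \<tau>_attains by blast
    then obtain y where "y \<in> mspace mY" "warped_dist mX \<psi> SD r (f y) x \<le> A" using qi_dense x by blast
    then show "\<exists>z\<in>im_f. warped_dist mX \<psi> SD r x z \<le> A" by (metis imageI wX.warped_dist_commute)
  qed
  then obtain \<eta> where \<eta>: "\<eta> \<in> wX.word_ball (nat \<lceil>A\<rceil>)" "\<psi> \<eta> x \<in> im_f" by blast
  then have "\<eta> \<in> carrier D" using wX.word_ball_carrier by blast
  then have "x = \<psi> (inv\<^bsub>D\<^esub> \<eta>) (\<psi> \<eta> x)" using wX.act_inv_act[OF _ x] by simp
  then have "x \<in> translate (inv\<^bsub>D\<^esub> \<eta>)" using \<eta>(2) unfolding translate_def by (metis imageI)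
  then show ?thesis using \<eta>(1) by blast
qed

lemma finite_translates: "finite (translate ` carrier D)"
proof -
  have "translate a \<in> (\<lambda>\<eta>. translate (inv\<^bsub>D\<^esub> \<eta>)) ` wX.word_ball (nat \<lceil>A\<rceil>)" if a: "a \<in> carrier D" for a
  proof -
    obtain x where x: "x \<in> translate a" using translate_nonempty by blast
    then obtain \<eta> where \<eta>: "\<eta> \<in> wX.word_ball (nat \<lceil>A\<rceil>)" "x \<in> translate (inv\<^bsub>D\<^esub> \<eta>)"
      using mspace_subset_translates translate_subset[OF a] by blast
    then have "translate a = translate (inv\<^bsub>D\<^esub> \<eta>)"
      using translate_overlap[OF a] x wX.word_ball_carrier by blast
    then show ?thesis using \<eta>(1) by blast
  qed
  then have "translate ` carrier D \<subseteq> (\<lambda>\<eta>. translate (inv\<^bsub>D\<^esub> \<eta>)) ` wX.word_ball (nat \<lceil>A\<rceil>)" by blast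
  then show ?thesis using wX.finite_word_ball finite_surj by blast
qed

lemma topspace_subset_translates: "topspace (mtopology_of mX) \<subseteq> \<Union> (translate ` carrier D)"
  using mspace_subset_translates wX.word_ball_carrier by fastforce

lemma translate_in_connected_components_of:
  assumes a: "a \<in> carrier D"
  shows "translate a \<in> connected_components_of (mtopology_of mX)"
proof -
  have "openin (mtopology_of mX) (translate a)"
  proof (rule openin_finite_closed_partition[OF finite_translates _ topspace_subset_translates])
    fix T assume "T \<in> translate ` carrier D"
    then show "closedin (mtopology_of mX) T" using closedin_translate by auto
  next
    fix T T' assume "T \<in> translate ` carrier D" "T' \<in> translate ` carrier D" and ne: "T \<inter> T' \<noteq> {}"
    then obtain b b' where "b \<in> carrier D" "b' \<in> carrier D" "T = translate b" "T' = translate b'"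
      by blast
    then show "T = T'" using translate_overlap ne by simp
  next
    show "translate a \<in> translate ` carrier D" using a by blast
  qed
  moreover obtain x where "x \<in> translate a" using translate_nonempty by blast
  ultimately show ?thesis
    using connected_components_of_clopen[OF connectedin_translate[OF a] closedin_translate[OF a]] by blast
qed

lemma connected_components_of_eq_translates:
  "connected_components_of (mtopology_of mX) = translate ` carrier D"
proof (intro equalityI subsetI)
  fix K assume K: "K \<in> connected_components_of (mtopology_of mX)"
  obtain x where x: "x \<in> K" using nonempty_connected_components_of[OF K] by blast
  then have "x \<in> topspace (mtopology_of mX)" using connected_components_of_subset[OF K] by blast
  then obtain a where a: "a \<in> carrier D" "x \<in> translate a" using topspace_subset_translates by blast
  then have "K = translate a"
    using connected_components_of_overlap[OF K translate_in_connected_components_of[OF a(1)]] x by blast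
  then show "K \<in> translate ` carrier D" using a by blast
qed (use translate_in_connected_components_of in blast)

text \<open>Taking inverses matches the translates, which are indexed by left cosets of D', with the
  right cosets counted in the theorem.\<close>
lemma translate_inv_eq_iff_rcos_eq:
  assumes a: "a \<in> carrier D" and b: "b \<in> carrier D"
  shows "translate (inv\<^bsub>D\<^esub> a) = translate (inv\<^bsub>D\<^esub> b) \<longleftrightarrow> D' #>\<^bsub>D\<^esub> a = D' #>\<^bsub>D\<^esub> b"
proof -
  have ia: "inv\<^bsub>D\<^esub> a \<in> carrier D" and c: "b \<otimes>\<^bsub>D\<^esub> inv\<^bsub>D\<^esub> a \<in> carrier D" using a b by auto
  have "translate (inv\<^bsub>D\<^esub> a) = translate (inv\<^bsub>D\<^esub> b) \<longleftrightarrow>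
      \<psi> b ` translate (inv\<^bsub>D\<^esub> a) = \<psi> b ` translate (inv\<^bsub>D\<^esub> b)"
    by (rule inj_on_image_eq_iff[OF wX.inj_on_act[OF b], symmetric])
      (use translate_subset ia b in blast)+
  also have "\<dots> \<longleftrightarrow> translate (b \<otimes>\<^bsub>D\<^esub> inv\<^bsub>D\<^esub> a) = im_f"
    using image_translate[OF b ia] image_translate[OF b, of "inv\<^bsub>D\<^esub> b"] b translate_one by simp
  also have "\<dots> \<longleftrightarrow> b \<otimes>\<^bsub>D\<^esub> inv\<^bsub>D\<^esub> a \<in> D'" using c by (simp add: translate_def)
  also have "\<dots> \<longleftrightarrow> b \<in> D' #>\<^bsub>D\<^esub> a" using subgroup.rcos_module[OF subgroup_D' D a b] by simp
  also have "\<dots> \<longleftrightarrow> D' #>\<^bsub>D\<^esub> a = D' #>\<^bsub>D\<^esub> b"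
    using wX.repr_independence[OF _ a subgroup_D'] wX.repr_independenceD[OF subgroup_D' b] by blast
  finally show ?thesis .
qed

lemma card_connected_components_of:
  "card (connected_components_of (mtopology_of mX)) = card (rcosets\<^bsub>D\<^esub> D') \<and> finite (rcosets\<^bsub>D\<^esub> D')"
proof -
  have "translate ` carrier D = (\<lambda>a. translate (inv\<^bsub>D\<^esub> a)) ` carrier D"
  proof (intro equalityI subsetI)
    fix K assume "K \<in> translate ` carrier D"
    then obtain a where "a \<in> carrier D" "K = translate (inv\<^bsub>D\<^esub> (inv\<^bsub>D\<^esub> a))" by auto
    then show "K \<in> (\<lambda>a. translate (inv\<^bsub>D\<^esub> a)) ` carrier D" by blast
  qed auto
  moreover have "rcosets\<^bsub>D\<^esub> D' = (\<lambda>a. D' #>\<^bsub>D\<^esub> a) ` carrier D" unfolding RCOSETS_def by blast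
  moreover have "card ((\<lambda>a. translate (inv\<^bsub>D\<^esub> a)) ` carrier D) = card ((\<lambda>a. D' #>\<^bsub>D\<^esub> a) ` carrier D) \<and>
      (finite ((\<lambda>a. translate (inv\<^bsub>D\<^esub> a)) ` carrier D) \<longleftrightarrow> finite ((\<lambda>a. D' #>\<^bsub>D\<^esub> a) ` carrier D))"
    by (rule card_image_eq_if_same_fibres) (simp add: translate_inv_eq_iff_rcos_eq)
  ultimately show ?thesis using connected_components_of_eq_translates finite_translates by simp
qed

lemma connected_components_of_transitive:
  assumes "K1 \<in> connected_components_of (mtopology_of mX)"
    and "K2 \<in> connected_components_of (mtopology_of mX)"
  shows "\<exists>\<delta>\<in>carrier D. \<psi> \<delta> ` K1 = K2"
proof -
  obtain a b where ab: "a \<in> carrier D" "b \<in> carrier D" "K1 = translate a" "K2 = translate b"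
    using assms connected_components_of_eq_translates by auto
  then have "\<psi> (b \<otimes>\<^bsub>D\<^esub> inv\<^bsub>D\<^esub> a) ` K1 = K2"
    using image_translate[of "b \<otimes>\<^bsub>D\<^esub> inv\<^bsub>D\<^esub> a" a] by (simp add: wX.m_assoc)
  then show ?thesis using ab by blast
qed

lemma induced_hom_iso_if_homeomorphic:
  assumes hm: "homeomorphic_map (mtopology_of mY) (mtopology_of mX) f"
  shows "induced_hom \<in> iso G D"
  unfolding group_hom.iso_iff[OF group_hom_induced_hom]
proof (intro conjI ballI impI)
  have "im_f = mspace mX" using homeomorphic_imp_surjective_map[OF hm] by simp
  then have "carrier D \<subseteq> D'" using wX.act_image by auto
  then show "carrier D \<subseteq> induced_hom ` carrier G" unfolding D'_eq_image .
next
  obtain y0 where y0: "y0 \<in> mspace mY" "free_point G \<phi> y0" using free_orbit by blast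
  fix \<gamma> assume g: "\<gamma> \<in> carrier G" and one: "induced_hom \<gamma> = \<one>\<^bsub>D\<^esub>"
  have "f (\<phi> \<gamma> y0) = f y0"
    using induced_hom_equivariant[OF g y0(1)] one wX.act_one[OF f_mspace[OF y0(1)]] by simp
  then have "\<phi> \<gamma> y0 = y0"
    using homeomorphic_imp_injective_map[OF hm] wY.act_closed[OF g y0(1)] y0(1)
    by (auto dest: inj_onD)
  then show "\<gamma> = \<one>\<^bsub>G\<^esub>" using y0(2) g unfolding free_point_def by blast
qed

end

theorem theorem4p1:
  fixes G :: "'g monoid" and D :: "'d monoid"
    and mY :: "'y metric" and mX :: "'x metric"
    and \<phi> :: "'g \<Rightarrow> 'y \<Rightarrow> 'y" and \<psi> :: "'d \<Rightarrow> 'x \<Rightarrow> 'x"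
    and SG :: "'g set" and SD :: "'d set"
    and f :: "'y \<Rightarrow> 'x"
    and I :: "'i set" and t \<tau> :: "'i \<Rightarrow> real" and C A :: real
  assumes G: "group G" and D: "group D"
    and SG: "fin_sym_gen_set G SG" and SD: "fin_sym_gen_set D SD"
    and Ycomp: "compact_space (mtopology_of mY)"
    and Xcomp: "compact_space (mtopology_of mX)"
    and Yconn: "connected_space (mtopology_of mY)"
    and actY: "continuous_action G mY \<phi>"
    and actX: "continuous_action D mX \<psi>"
    and free_orbit: "\<exists>y\<in>mspace mY. free_point G \<phi> y"
    and free_act: "\<forall>x\<in>mspace mX. free_point D \<psi> x"
    and f_cont: "continuous_map (mtopology_of mY) (mtopology_of mX) f"
    and t_surj: "t ` I = {0<..}" and \<tau>_surj: "\<tau> ` I = {0<..}"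
    and C: "C \<ge> 1" and A: "A \<ge> 0"
    and qi_lower: "\<forall>i\<in>I. \<forall>y\<in>mspace mY. \<forall>y'\<in>mspace mY.
        warped_dist mY \<phi> SG (t i) y y' / C - A
          \<le> warped_dist mX \<psi> SD (\<tau> i) (f y) (f y')"
    and qi_upper: "\<forall>i\<in>I. \<forall>y\<in>mspace mY. \<forall>y'\<in>mspace mY.
        warped_dist mX \<psi> SD (\<tau> i) (f y) (f y')
          \<le> C * warped_dist mY \<phi> SG (t i) y y' + A"
    and qi_dense: "\<forall>i\<in>I. \<forall>x\<in>mspace mX. \<exists>y\<in>mspace mY.
        warped_dist mX \<psi> SD (\<tau> i) (f y) x \<le> A"
  defines "D' \<equiv> {\<delta> \<in> carrier D. \<psi> \<delta> ` (f ` mspace mY) = f ` mspace mY}"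
  shows "finite (rcosets\<^bsub>D\<^esub> D') \<and>
    (\<exists>(F :: 'g set) (\<pi> :: 'g \<Rightarrow> 'd) (h :: 'x \<Rightarrow> 'y set) (Q :: 'y set topology).
       \<comment> \<open>(1) short exact sequence 1 -> F -> G -> D' -> 1 with F finite\<close>
       \<pi> \<in> hom G D \<and> \<pi> ` carrier G = D' \<and> F = kernel G D \<pi> \<and> finite F \<and>
       \<comment> \<open>(2) Q is the quotient topology on Y/F, h : im f -> Y/F homeomorphism,
            q = h o f, and h conjugates D' on im f with G/F on Y/F\<close>
       quotient_map (mtopology_of mY) Q (\<lambda>y. {\<phi> g y | g. g \<in> F}) \<and>
       homeomorphic_map (subtopology (mtopology_of mX) (f ` mspace mY)) Q h \<and>
       (\<forall>y\<in>mspace mY. h (f y) = {\<phi> g y | g. g \<in> F}) \<and>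
       (\<forall>\<gamma>\<in>carrier G. \<forall>x\<in>f ` mspace mY. h (\<psi> (\<pi> \<gamma>) x) = \<phi> \<gamma> ` h x) \<and>
       \<comment> \<open>(3) connected components\<close>
       f ` mspace mY \<in> connected_components_of (mtopology_of mX) \<and>
       card (connected_components_of (mtopology_of mX)) = card (rcosets\<^bsub>D\<^esub> D') \<and>
       (\<forall>K1\<in>connected_components_of (mtopology_of mX).
          \<forall>K2\<in>connected_components_of (mtopology_of mX).
            \<exists>\<delta>\<in>carrier D. \<psi> \<delta> ` K1 = K2)) \<and>
    \<comment> \<open>in particular\<close>
    (homeomorphic_map (mtopology_of mY) (mtopology_of mX) f \<longrightarrow>
       (\<exists>\<pi>. \<pi> \<in> iso G D \<and>
          (\<forall>\<gamma>\<in>carrier G. \<forall>y\<in>mspace mY. f (\<phi> \<gamma> y) = \<psi> (\<pi> \<gamma>) (f y))))"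
proof -
  interpret warped_cone_qi G D mY mX \<phi> \<psi> SG SD f I t \<tau> C A
    by (rule warped_cone_qi.intro[OF G D SG SD Ycomp Yconn actY actX free_orbit free_act f_cont
          t_surj \<tau>_surj C A qi_lower qi_upper qi_dense])
  have quotient: "quotient_map (mtopology_of mY) (quotient_topology (mtopology_of mY) kernel_orbit)
      (\<lambda>y. {\<phi> g y | g. g \<in> kernel G D induced_hom})"
    using quotient_map_quotient_topology unfolding kernel_orbit_def[abs_def] .
  have fibre_f: "\<forall>y\<in>mspace mY. fibre (f y) = {\<phi> g y | g. g \<in> kernel G D induced_hom}"
    using kernel_orbit_eq_fibre by (simp add: kernel_orbit_def)
  have component: "f ` mspace mY \<in> connected_components_of (mtopology_of mX)"
    using translate_in_connected_components_of[of "\<one>\<^bsub>D\<^esub>"] translate_one by simp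
  show ?thesis
    unfolding D'_def
    using card_connected_components_of connected_components_of_transitive induced_hom_hom D'_eq_image
      finite_kernel quotient homeomorphic_map_fibre fibre_f fibre_equivariant component
      induced_hom_iso_if_homeomorphic induced_hom_equivariant
    by (intro conjI impI exI[of _ "kernel G D induced_hom"] exI[of _ induced_hom] exI[of _ fibre]
        exI[of _ "quotient_topology (mtopology_of mY) kernel_orbit"]) auto
qed

end
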